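(* Let $R$ be a commutative ring with identity and let $\mathcal{N}(R)$ be the set of all nilpotent elements of $R$. Then $\mathcal{N}(R)=\bigcup_{a\in R} a\Gamma_a(R)=E_R(0)$.
   Context: For $a\in R$, $a\Gamma_{a}(R)=\{ar \mid r\in R,\ a^{k}r=0 \text{ for some } k\in\mathbb{Z}^{+}\}$. $E_R(0)=\{ar \mid a,r\in R,\ a^{k}r=0 \text{ for some } k\in\mathbb{Z}^{+}\}$ (the envelope of the zero ideal in the $R$-module $R$). *)

theory Defs
  imports Main
begin

definition nilpotents :: "'a::comm_ring_1 set" where
  "nilpotents = {x. \<exists>n::nat. n > 0 \<and> x ^ n = 0}"

definition aGamma :: "'a::comm_ring_1 \<Rightarrow> 'a set" where
  "aGamma a = {a * r | r. \<exists>k::nat. k > 0 \<and> a ^ k * r = 0}"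

definition envelope_zero :: "'a::comm_ring_1 set" where
  "envelope_zero = {a * r | a r. \<exists>k::nat. k > 0 \<and> a ^ k * r = 0}"

end

theory Submission
  imports Defs
begin

lemma mult_power_eq_0_if_power_mult_eq_0:
  fixes a r :: "'a::comm_semiring_1"
  assumes "a ^ k * r = 0" and "k > 0"
  shows "(a * r) ^ k = 0"
proof -
  obtain j where k: "k = Suc j" using \<open>k > 0\<close> by (cases k) auto
  have "(a * r) ^ k = (a ^ k * r) * r ^ j"
    by (simp add: k power_mult_distrib algebra_simps)
  with assms(1) show ?thesis by simp
qed

lemma nilpotent_in_aGamma:
  assumes "x \<in> nilpotents"
  shows "x \<in> aGamma x"
proof -
  from assms obtain n where "n > 0" "x ^ n = 0" by (auto simp: nilpotents_def)
  then have "x = x * 1 \<and> (\<exists>k::nat. k > 0 \<and> x ^ k * 1 = 0)" by auto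
  then show ?thesis unfolding aGamma_def by blast
qed

lemma aGamma_subset_nilpotents: "aGamma a \<subseteq> nilpotents"
  unfolding aGamma_def nilpotents_def using mult_power_eq_0_if_power_mult_eq_0 by blast

lemma Union_aGamma_eq_envelope_zero: "(\<Union>a. aGamma a) = envelope_zero"
  unfolding aGamma_def envelope_zero_def by blast

theorem mainTheorem10:
  shows "(nilpotents :: 'a::comm_ring_1 set) = (\<Union>a. aGamma a)
       \<and> (\<Union>a. aGamma a) = (envelope_zero :: 'a set)"
proof
  have "nilpotents \<subseteq> (\<Union>a. aGamma a :: 'a set)"
    using nilpotent_in_aGamma by blast
  moreover have "(\<Union>a. aGamma a) \<subseteq> (nilpotents :: 'a set)"
    using aGamma_subset_nilpotents by blast
  ultimately show "(nilpotents :: 'a set) = (\<Union>a. aGamma a)" by (rule subset_antisym)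
  show "(\<Union>a. aGamma a) = (envelope_zero :: 'a set)"
    by (rule Union_aGamma_eq_envelope_zero)
qed

end
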